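(* Let $S$ be a finite state space, $P$ a row-stochastic $|S|\times|S|$ matrix, $R\in\mathbb{R}^{|S|}$, $\gamma\in(0,1)$, $\beta\in(0,1)$, $d_\mu$ a probability vector on $S$, $f^\top=d_\mu^\top(I-\beta P)^{-1}$ with $f(s)>0$ for all $s$, and $\kappa=\min_s d_\mu(s)/f(s)$. Let $T(V)=R+\gamma PV$, let $V^\pi=(I-\gamma P)^{-1}R$ be its fixed point, let $\Phi$ be an $n\times|S|$ feature matrix (columns $\phi(s)\in\mathbb{R}^n$), and let $\Pi_f$ be the orthogonal projection onto $\{\Phi^\top\theta:\theta\in\mathbb{R}^n\}$ with respect to $\|v\|_f=\sqrt{\sum_s f(s)v(s)^2}$. Assume $\beta>\gamma^2(1-\kappa)$ and let $\theta^*$ satisfy $\Phi^\top\theta^*=\Pi_f T(\Phi^\top\theta^* )$. Then $$\|\Phi^\top\theta^*-V^\pi\|_f\le \frac{1}{\sqrt{1-\frac{\gamma^2}{\beta}(1-\kappa)}}\,\|\Pi_f V^\pi-V^\pi\|_f,$$ $$\|\Phi^\top\theta^*-V^\pi\|_{d_\mu}\le \frac{1}{\sqrt{\gamma\left(1-\frac{\gamma^2}{\beta}(1-\kappa)\right)}}\,\|\Pi_f V^\pi-V^\pi\|_f,$$ where $\|v\|_{d_\mu}=\sqrt{\sum_s d_\mu(s)v(s)^2}$.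
   Context: $P,R$ are the transition matrix and reward vector of the target policy $\pi$ in a finite MDP with discount $\gamma$; $d_\mu$ is the stationary state distribution of the behavior policy; $\theta^*$ is the limit of the ETD(0, $\beta$) algorithm, characterized as a solution of the projected fixed-point equation $V=\Pi_f T V$. *)

theory Defs
  imports "HOL-Analysis.Analysis"
begin

definition winner :: "real^'s \<Rightarrow> real^'s \<Rightarrow> real^'s \<Rightarrow> real" where
  "winner w u v = (\<Sum>s\<in>UNIV. w$s * u$s * v$s)"

definition wnorm :: "real^'s \<Rightarrow> real^'s \<Rightarrow> real" where
  "wnorm w v = sqrt (\<Sum>s\<in>UNIV. w$s * (v$s)^2)"

definition wproj :: "real^'s \<Rightarrow> real^'s^'n \<Rightarrow> real^'s \<Rightarrow> real^'s" where
  "wproj w Phi v = (THE p. p \<in> range (\<lambda>\<theta>. transpose Phi *v \<theta>) \<and>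
      (\<forall>u \<in> range (\<lambda>\<theta>. transpose Phi *v \<theta>). winner w (v - p) u = 0))"

definition row_stochastic :: "real^'s^'s \<Rightarrow> bool" where
  "row_stochastic P \<longleftrightarrow> (\<forall>i j. P$i$j \<ge> 0) \<and> (\<forall>i. (\<Sum>j\<in>UNIV. P$i$j) = 1)"

definition prob_vector :: "real^'s \<Rightarrow> bool" where
  "prob_vector d \<longleftrightarrow> (\<forall>s. d$s \<ge> 0) \<and> (\<Sum>s\<in>UNIV. d$s) = 1"

end

theory Submission
  imports Defs
begin

text \<open>Write \<open>x = \<Phi>\<^sup>T\<theta>\<^sup>*\<close>, \<open>V = V\<^sup>\<pi>\<close> and \<open>\<Pi> = \<Pi>\<^sub>f\<close>. Since \<open>T V = V\<close> and \<open>\<Pi>\<close> is linear,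
  \<open>x - \<Pi> V = \<Pi> (T x - T V) = \<Pi> (\<gamma> P (x - V))\<close>, and \<open>\<Pi>\<close> is non-expansive in \<open>\<parallel>\<cdot>\<parallel>\<^sub>f\<close>.
  The identity \<open>f\<^sup>T (I - \<beta> P) = d\<^sub>\<mu>\<^sup>T \<ge> \<kappa> f\<^sup>T\<close> gives \<open>f\<^sup>T P \<le> (1 - \<kappa>)/\<beta> f\<^sup>T\<close>, which by
  Jensen's inequality row by row yields \<open>\<parallel>P v\<parallel>\<^sub>f\<^sup>2 \<le> (1 - \<kappa>)/\<beta> \<parallel>v\<parallel>\<^sub>f\<^sup>2\<close>. Pythagoras for the
  orthogonal decomposition \<open>x - V = (x - \<Pi> V) + (\<Pi> V - V)\<close> then gives
  \<open>\<parallel>x - V\<parallel>\<^sub>f\<^sup>2 \<le> \<gamma>\<^sup>2 (1 - \<kappa>)/\<beta> \<parallel>x - V\<parallel>\<^sub>f\<^sup>2 + \<parallel>\<Pi> V - V\<parallel>\<^sub>f\<^sup>2\<close>. The \<open>d\<^sub>\<mu>\<close>-bound follows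
  from \<open>d\<^sub>\<mu> \<le> f\<close> and \<open>\<gamma> < 1\<close>.\<close>

lemma matrix_inv_left:
  fixes A :: "'a::field^'n^'n"
  assumes "invertible A"
  shows "matrix_inv A ** A = mat 1"
  using someI_ex[OF assms[unfolded invertible_def]] by (simp add: matrix_inv_def)

lemma matrix_inv_right:
  fixes A :: "'a::field^'n^'n"
  assumes "invertible A"
  shows "A ** matrix_inv A = mat 1"
  using someI_ex[OF assms[unfolded invertible_def]] by (simp add: matrix_inv_def)

lemma fixed_point_matrix_inv_id_minus:
  fixes P :: "real^'s^'s"
  assumes "invertible (mat 1 - c *\<^sub>R P)"
  shows "matrix_inv (mat 1 - c *\<^sub>R P) *v R = R + c *\<^sub>R (P *v (matrix_inv (mat 1 - c *\<^sub>R P) *v R))"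
proof -
  let ?V = "matrix_inv (mat 1 - c *\<^sub>R P) *v R"
  have "(mat 1 - c *\<^sub>R P) *v ?V = R"
    using matrix_inv_right[OF assms] by (simp add: matrix_vector_mul_assoc)
  hence "?V - c *\<^sub>R (P *v ?V) = R"
    by (simp add: matrix_vector_mult_diff_rdistrib scaleR_matrix_vector_assoc[symmetric])
  thus ?thesis
    by (metis diff_add_cancel)
qed

lemma vector_matrix_mult_id_minus:
  fixes P :: "real^'s^'s"
  shows "(f v* (mat 1 - c *\<^sub>R P))$j = f$j - c * (\<Sum>i\<in>UNIV. f$i * P$i$j)"
proof -
  have "(f v* (mat 1 - c *\<^sub>R P))$j = (\<Sum>i\<in>UNIV. f$i * (if i = j then 1 else 0) - c * (f$i * P$i$j))"
    unfolding vector_matrix_mult_def vec_lambda_beta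
    by (intro sum.cong) (auto simp: mat_def algebra_simps)
  also have "\<dots> = f$j - c * (\<Sum>i\<in>UNIV. f$i * P$i$j)"
    by (simp add: sum_subtractf sum_distrib_left if_distrib[of "\<lambda>t. _ * t"] cong: if_cong)
  finally show ?thesis .
qed

lemma row_stochastic_abs_mult_le:
  fixes P :: "real^'s^'s"
  assumes P: "row_stochastic P" and M: "\<And>j. \<bar>v$j\<bar> \<le> M"
  shows "\<bar>(P *v v)$i\<bar> \<le> M"
proof -
  have "\<bar>(P *v v)$i\<bar> \<le> (\<Sum>j\<in>UNIV. \<bar>P$i$j * v$j\<bar>)"
    unfolding matrix_vector_mult_def by (simp add: sum_abs)
  also have "\<dots> \<le> (\<Sum>j\<in>UNIV. P$i$j * M)"
    using P M unfolding row_stochastic_def by (intro sum_mono) (simp add: abs_mult mult_left_mono)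
  also have "\<dots> = M"
    using P unfolding row_stochastic_def by (simp add: sum_distrib_right[symmetric])
  finally show ?thesis .
qed

lemma invertible_id_minus_scaled_stochastic:
  fixes P :: "real^'s^'s"
  assumes P: "row_stochastic P" and c: "\<bar>c\<bar> < 1"
  shows "invertible (mat 1 - c *\<^sub>R P)"
  unfolding invertible_left_inverse matrix_left_invertible_ker
proof (intro allI impI)
  fix x :: "real^'s"
  assume "(mat 1 - c *\<^sub>R P) *v x = 0"
  hence x: "x = c *\<^sub>R (P *v x)"
    by (simp add: matrix_vector_mult_diff_rdistrib scaleR_matrix_vector_assoc)
  define M where "M = Max (range (\<lambda>i. \<bar>x$i\<bar>))"
  have le_M: "\<bar>x$i\<bar> \<le> M" for i
    unfolding M_def by (rule Max_ge) auto
  have "\<bar>x$i\<bar> \<le> \<bar>c\<bar> * M" for i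
    using arg_cong[OF x, of "\<lambda>v. \<bar>v$i\<bar>"] row_stochastic_abs_mult_le[OF P le_M, of i]
    by (simp add: abs_mult mult_left_mono)
  hence "M \<le> \<bar>c\<bar> * M"
    unfolding M_def by (intro Max.boundedI) auto
  hence "M \<le> 0"
    using c by (smt (verit) mult_less_cancel_right2)
  thus "x = 0"
    using le_M by (simp add: vec_eq_iff) (meson abs_le_zero_iff order_trans)
qed

lemma row_stochastic_mult_power2_le:
  fixes P :: "real^'s^'s"
  assumes P: "row_stochastic P"
  shows "((P *v v)$i)^2 \<le> (\<Sum>j\<in>UNIV. P$i$j * (v$j)^2)"
proof -
  define m where "m = (P *v v)$i"
  have m: "m = (\<Sum>j\<in>UNIV. P$i$j * v$j)"
    unfolding m_def matrix_vector_mult_def by simp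
  have row: "(\<Sum>j\<in>UNIV. P$i$j) = 1"
    using P unfolding row_stochastic_def by auto
  have "0 \<le> (\<Sum>j\<in>UNIV. P$i$j * (v$j - m)^2)"
    using P unfolding row_stochastic_def by (intro sum_nonneg) auto
  also have "\<dots> = (\<Sum>j\<in>UNIV. P$i$j * (v$j)^2) - 2 * m * (\<Sum>j\<in>UNIV. P$i$j * v$j)
      + m^2 * (\<Sum>j\<in>UNIV. P$i$j)"
    by (simp add: power2_eq_square algebra_simps sum.distrib sum_subtractf
        sum_distrib_left sum_distrib_right)
  also have "\<dots> = (\<Sum>j\<in>UNIV. P$i$j * (v$j)^2) - m^2"
    using row by (simp add: m[symmetric] power2_eq_square)
  finally show ?thesis unfolding m_def by simp
qed

lemma wnorm_power2:
  assumes "\<forall>s. 0 \<le> w$s"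
  shows "(wnorm w v)^2 = (\<Sum>s\<in>UNIV. w$s * (v$s)^2)"
  unfolding wnorm_def using assms by (intro real_sqrt_pow2 sum_nonneg) simp

lemma wnorm_mono_weight:
  assumes "\<forall>s. 0 \<le> w$s \<and> w$s \<le> w'$s"
  shows "wnorm w v \<le> wnorm w' v"
  unfolding wnorm_def using assms by (intro real_sqrt_le_mono sum_mono mult_right_mono) auto

lemma wnorm_power2_stochastic_mult_le:
  fixes P :: "real^'s^'s"
  assumes P: "row_stochastic P" and w: "\<forall>s. 0 \<le> w$s"
    and K: "\<And>j. (\<Sum>i\<in>UNIV. w$i * P$i$j) \<le> K * w$j"
  shows "(wnorm w (P *v v))^2 \<le> K * (wnorm w v)^2"
proof -
  have "(\<Sum>i\<in>UNIV. w$i * ((P *v v)$i)^2) \<le> (\<Sum>i\<in>UNIV. w$i * (\<Sum>j\<in>UNIV. P$i$j * (v$j)^2))"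
    using w row_stochastic_mult_power2_le[OF P] by (intro sum_mono mult_left_mono) auto
  also have "\<dots> = (\<Sum>j\<in>UNIV. (\<Sum>i\<in>UNIV. w$i * P$i$j) * (v$j)^2)"
    by (simp add: sum_distrib_left sum_distrib_right mult.assoc) (rule sum.swap)
  also have "\<dots> \<le> (\<Sum>j\<in>UNIV. K * w$j * (v$j)^2)"
    using K by (intro sum_mono mult_right_mono) auto
  also have "\<dots> = K * (\<Sum>j\<in>UNIV. w$j * (v$j)^2)"
    by (simp add: sum_distrib_left mult.assoc)
  finally show ?thesis
    using w by (simp add: wnorm_power2)
qed

lemma winner_commute: "winner w u v = winner w v u"
  unfolding winner_def by (simp add: ac_simps)

lemma winner_diff_left: "winner w (u - u') v = winner w u v - winner w u' v"
  unfolding winner_def by (simp add: algebra_simps sum_subtractf)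

lemma winner_minus_left: "winner w (- u) v = - winner w u v"
  unfolding winner_def by (simp add: sum_negf)

text \<open>Rescaling by \<open>\<surd>w\<close> identifies \<open>winner w\<close> and \<open>wnorm w\<close> with the Euclidean structure.\<close>
definition wscale :: "real^'s \<Rightarrow> real^'s \<Rightarrow> real^'s" where
  "wscale w v = (\<chi> s. sqrt (w$s) * v$s)"

lemma wscale_add [simp]: "wscale w (u + v) = wscale w u + wscale w v"
  and wscale_diff [simp]: "wscale w (u - v) = wscale w u - wscale w v"
  and wscale_scaleR [simp]: "wscale w (c *\<^sub>R v) = c *\<^sub>R wscale w v"
  by (simp_all add: wscale_def vec_eq_iff algebra_simps)

lemma wscale_eq_0_iff:
  assumes "\<forall>s. 0 < w$s"
  shows "wscale w v = 0 \<longleftrightarrow> v = 0"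
  using assms by (simp add: wscale_def vec_eq_iff) (metis less_irrefl)

lemma winner_eq_inner_wscale:
  assumes "\<forall>s. 0 \<le> w$s"
  shows "winner w u v = inner (wscale w u) (wscale w v)"
  unfolding winner_def wscale_def inner_vec_def
  using assms by (intro sum.cong) (simp_all add: ac_simps real_sqrt_mult[symmetric])

lemma wnorm_eq_norm_wscale:
  assumes "\<forall>s. 0 \<le> w$s"
  shows "wnorm w v = norm (wscale w v)"
proof -
  have "wnorm w v = sqrt (winner w v v)"
    unfolding wnorm_def winner_def by (simp add: power2_eq_square mult.assoc)
  thus ?thesis
    using assms by (simp add: winner_eq_inner_wscale norm_eq_sqrt_inner)
qed

lemma wnorm_scaleR:
  assumes "\<forall>s. 0 \<le> w$s"
  shows "wnorm w (c *\<^sub>R v) = \<bar>c\<bar> * wnorm w v"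
  using assms by (simp add: wnorm_eq_norm_wscale)

lemma wnorm_add_orthogonal:
  assumes "\<forall>s. 0 \<le> w$s" and "winner w u v = 0"
  shows "(wnorm w (u + v))^2 = (wnorm w u)^2 + (wnorm w v)^2"
  using assms by (simp add: wnorm_eq_norm_wscale winner_eq_inner_wscale norm_add_Pythagorean
      orthogonal_def)

subsection \<open>Weighted orthogonal projection\<close>

abbreviation feature_span :: "real^'s^'n \<Rightarrow> (real^'s) set" where
  "feature_span Phi \<equiv> range (\<lambda>\<theta>. transpose Phi *v \<theta>)"

lemma subspace_feature_span: "subspace (feature_span Phi)"
  by (rule linear_subspace_image[OF matrix_vector_mul_linear subspace_UNIV])

lemma wproj_exists:
  fixes Phi :: "real^'s^'n"
  assumes w: "\<forall>s. 0 \<le> w$s"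
  shows "\<exists>p \<in> feature_span Phi. \<forall>u \<in> feature_span Phi. winner w (v - p) u = 0"
proof -
  define g where "g = (\<lambda>\<theta>. wscale w (transpose Phi *v \<theta>))"
  have "linear g"
    unfolding g_def
    by (intro linearI) (simp_all add: matrix_vector_right_distrib matrix_vector_mult_scaleR)
  hence span_g: "span (range g) = range g"
    by (simp add: span_eq_iff linear_subspace_image[OF _ subspace_UNIV])
  obtain y z where y: "y \<in> span (range g)" and z: "\<And>u. u \<in> span (range g) \<Longrightarrow> orthogonal z u"
    and yz: "wscale w v = y + z"
    using orthogonal_subspace_decomp_exists by blast
  obtain t where t: "y = g t"
    using y span_g by auto
  show ?thesis
  proof (intro bexI ballI)
    fix u assume "u \<in> feature_span Phi"
    then obtain s where u: "u = transpose Phi *v s" by auto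
    have "winner w (v - transpose Phi *v t) u = inner z (g s)"
      using yz t w by (simp add: winner_eq_inner_wscale u g_def)
    also have "\<dots> = 0"
      using z[of "g s"] span_g by (auto simp: orthogonal_def)
    finally show "winner w (v - transpose Phi *v t) u = 0" .
  qed auto
qed

lemma wproj_unique:
  fixes Phi :: "real^'s^'n"
  assumes w: "\<forall>s. 0 < w$s"
    and p: "p \<in> feature_span Phi" "\<forall>u \<in> feature_span Phi. winner w (v - p) u = 0"
    and q: "q \<in> feature_span Phi" "\<forall>u \<in> feature_span Phi. winner w (v - q) u = 0"
  shows "p = q"
proof -
  have w0: "\<forall>s. 0 \<le> w$s"
    using w less_imp_le by blast
  have "p - q \<in> feature_span Phi"
    using subspace_feature_span p(1) q(1) by (rule subspace_diff)
  hence "winner w (v - q) (p - q) - winner w (v - p) (p - q) = 0"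
    using bspec[OF p(2)] bspec[OF q(2)] by (simp only: diff_self)
  hence "winner w (p - q) (p - q) = 0"
    by (simp add: winner_diff_left[symmetric])
  hence "wscale w (p - q) = 0"
    by (simp add: winner_eq_inner_wscale[OF w0] del: wscale_diff)
  thus ?thesis
    unfolding wscale_eq_0_iff[OF w] by simp
qed

lemma wproj_eq_iff:
  fixes Phi :: "real^'s^'n"
  assumes w: "\<forall>s. 0 < w$s"
  shows "wproj w Phi v = p \<longleftrightarrow>
    p \<in> feature_span Phi \<and> (\<forall>u \<in> feature_span Phi. winner w (v - p) u = 0)"
proof -
  obtain p0 where p0: "p0 \<in> feature_span Phi" "\<forall>u \<in> feature_span Phi. winner w (v - p0) u = 0"
    using wproj_exists[of w Phi v] w less_imp_le by blast
  have unique: "p = p0" if "p \<in> feature_span Phi" "\<forall>u \<in> feature_span Phi. winner w (v - p) u = 0"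
    for p
    using wproj_unique[OF w that p0] .
  have proj: "wproj w Phi v = p0"
    unfolding wproj_def
  proof (rule the_equality)
    show "p0 \<in> feature_span Phi \<and> (\<forall>u \<in> feature_span Phi. winner w (v - p0) u = 0)"
      using p0 by (rule conjI)
  qed (elim conjE, rule unique)
  show ?thesis
  proof
    assume "wproj w Phi v = p"
    thus "p \<in> feature_span Phi \<and> (\<forall>u \<in> feature_span Phi. winner w (v - p) u = 0)"
      using proj p0 by simp
  qed (elim conjE, unfold proj, rule sym, rule unique)
qed

lemma wproj_in_feature_span:
  assumes "\<forall>s. 0 < w$s"
  shows "wproj w Phi v \<in> feature_span Phi"
  using wproj_eq_iff[OF assms, THEN iffD1, OF refl] by (rule conjunct1)

lemma winner_wproj_orthogonal:
  assumes "\<forall>s. 0 < w$s" and "u \<in> feature_span Phi"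
  shows "winner w (v - wproj w Phi v) u = 0"
  using conjunct2[OF wproj_eq_iff[OF assms(1), THEN iffD1, OF refl]] assms(2) by (rule bspec)

lemma wproj_diff:
  assumes w: "\<forall>s. 0 < w$s"
  shows "wproj w Phi (u - v) = wproj w Phi u - wproj w Phi v"
proof (subst wproj_eq_iff[OF w], intro conjI ballI)
  show "wproj w Phi u - wproj w Phi v \<in> feature_span Phi"
    using subspace_feature_span wproj_in_feature_span[OF w] wproj_in_feature_span[OF w]
    by (rule subspace_diff)
  fix z assume z: "z \<in> feature_span Phi"
  have "winner w (u - wproj w Phi u) z - winner w (v - wproj w Phi v) z = 0"
    using winner_wproj_orthogonal[OF w z, of u] winner_wproj_orthogonal[OF w z, of v] by linarith
  moreover have "u - v - (wproj w Phi u - wproj w Phi v) = (u - wproj w Phi u) - (v - wproj w Phi v)"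
    by simp
  ultimately show "winner w (u - v - (wproj w Phi u - wproj w Phi v)) z = 0"
    by (simp only: winner_diff_left)
qed

lemma wnorm_wproj_le:
  assumes w: "\<forall>s. 0 < w$s"
  shows "wnorm w (wproj w Phi v) \<le> wnorm w v"
proof -
  have w0: "\<forall>s. 0 \<le> w$s"
    using w less_imp_le by blast
  have "winner w (wproj w Phi v) (v - wproj w Phi v) = 0"
    by (subst winner_commute) (rule winner_wproj_orthogonal[OF w wproj_in_feature_span[OF w]])
  from wnorm_add_orthogonal[OF w0 this]
  have "(wnorm w v)^2 = (wnorm w (wproj w Phi v))^2 + (wnorm w (v - wproj w Phi v))^2"
    by simp
  hence "(wnorm w (wproj w Phi v))^2 \<le> (wnorm w v)^2"
    by simp
  thus ?thesis
    by (rule power2_le_imp_le) (simp add: wnorm_eq_norm_wscale[OF w0])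
qed

subsection \<open>Projected fixed points\<close>

lemma le_inverse_sqrt_mult_if_power2_le:
  fixes a b c :: real
  assumes "0 < c" "0 \<le> b" "c * a^2 \<le> b^2"
  shows "a \<le> 1 / sqrt c * b"
proof -
  have "a^2 \<le> b^2 / c"
    using assms by (simp add: pos_le_divide_eq mult.commute)
  hence "a \<le> sqrt (b^2 / c)"
    by (simp add: real_le_rsqrt)
  also have "\<dots> = 1 / sqrt c * b"
    using assms by (simp add: real_sqrt_divide)
  finally show ?thesis .
qed

lemma wnorm_projected_fixed_point_error_le:
  fixes P :: "real^'s^'s" and Phi :: "real^'s^'n"
  assumes w: "\<forall>s. 0 < w$s"
    and contraction: "\<And>v. (wnorm w (P *v v))^2 \<le> K * (wnorm w v)^2"
    and q: "\<gamma>^2 * K < 1"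
    and V: "V = R + \<gamma> *\<^sub>R (P *v V)"
    and x: "x = wproj w Phi (R + \<gamma> *\<^sub>R (P *v x))"
  shows "wnorm w (x - V) \<le> 1 / sqrt (1 - \<gamma>^2 * K) * wnorm w (wproj w Phi V - V)"
proof -
  have w0: "\<forall>s. 0 \<le> w$s"
    using w less_imp_le by blast
  define e where "e = x - wproj w Phi V"
  have R: "R = V - \<gamma> *\<^sub>R (P *v V)"
    using V by (metis add_diff_cancel_right')
  have "e = wproj w Phi (R + \<gamma> *\<^sub>R (P *v x) - V)"
    unfolding e_def by (subst x) (simp add: wproj_diff[OF w])
  also have "R + \<gamma> *\<^sub>R (P *v x) - V = \<gamma> *\<^sub>R (P *v (x - V))"
    unfolding R by (simp add: matrix_vector_mult_diff_distrib scaleR_diff_right)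
  finally have e_proj: "e = wproj w Phi (\<gamma> *\<^sub>R (P *v (x - V)))" .
  have "(wnorm w e)^2 \<le> (wnorm w (\<gamma> *\<^sub>R (P *v (x - V))))^2"
    unfolding e_proj
    by (intro power_mono wnorm_wproj_le[OF w]) (simp add: wnorm_eq_norm_wscale[OF w0])
  also have "\<dots> \<le> \<gamma>^2 * (K * (wnorm w (x - V))^2)"
    by (simp add: wnorm_scaleR[OF w0] power_mult_distrib mult_left_mono contraction)
  finally have e_le: "(wnorm w e)^2 \<le> \<gamma>^2 * K * (wnorm w (x - V))^2"
    by (simp add: mult.assoc)
  have "e \<in> feature_span Phi"
    unfolding e_def using subspace_feature_span
  proof (rule subspace_diff)
    show "x \<in> feature_span Phi"
      by (subst x) (rule wproj_in_feature_span[OF w])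
  qed (rule wproj_in_feature_span[OF w])
  hence "winner w (wproj w Phi V - V) e = 0"
    using winner_wproj_orthogonal[OF w] winner_minus_left[of w "V - wproj w Phi V" e] by simp
  from wnorm_add_orthogonal[OF w0 this]
  have "(wnorm w (x - V))^2 = (wnorm w (wproj w Phi V - V))^2 + (wnorm w e)^2"
    by (simp add: e_def)
  hence "(1 - \<gamma>^2 * K) * (wnorm w (x - V))^2 \<le> (wnorm w (wproj w Phi V - V))^2"
    using e_le by (simp add: algebra_simps)
  thus ?thesis
    using q by (intro le_inverse_sqrt_mult_if_power2_le) (simp_all add: wnorm_eq_norm_wscale[OF w0])
qed

subsection \<open>The emphatic weighting\<close>

lemma emphatic_weight_bounds:
  fixes P :: "real^'s^'s"
  assumes P: "row_stochastic P" and beta: "0 < \<beta>" and f: "\<forall>s. 0 \<le> f$s"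
    and fd: "f v* (mat 1 - \<beta> *\<^sub>R P) = d" and kappa: "\<And>j. \<kappa> * f$j \<le> d$j"
  shows "(\<Sum>i\<in>UNIV. f$i * P$i$j) \<le> (1 - \<kappa>) / \<beta> * f$j" and "d$j \<le> f$j"
proof -
  have d: "d$j = f$j - \<beta> * (\<Sum>i\<in>UNIV. f$i * P$i$j)"
    using vector_matrix_mult_id_minus[of f \<beta> P j] by (simp add: fd)
  show "(\<Sum>i\<in>UNIV. f$i * P$i$j) \<le> (1 - \<kappa>) / \<beta> * f$j"
    using d kappa[of j] beta by (simp add: field_simps)
  have "0 \<le> (\<Sum>i\<in>UNIV. f$i * P$i$j)"
    using P f unfolding row_stochastic_def by (intro sum_nonneg) auto
  thus "d$j \<le> f$j"
    using d beta by (simp add: mult_nonneg_nonneg)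
qed

theorem corollary1:
  fixes P :: "real^'s^'s" and R d :: "real^'s" and \<gamma> \<beta> :: real
    and Phi :: "real^'s^'n" and \<theta>star :: "real^'n"
    and f :: "real^'s" and \<kappa> :: real and T :: "real^'s \<Rightarrow> real^'s" and V\<pi> :: "real^'s"
  assumes P: "row_stochastic P"
    and gamma: "0 < \<gamma>" "\<gamma> < 1"
    and beta: "0 < \<beta>" "\<beta> < 1"
    and d: "prob_vector d"
    and f_def: "f = d v* matrix_inv (mat 1 - \<beta> *\<^sub>R P)"
    and f_pos: "\<forall>s. f$s > 0"
    and kappa_def: "\<kappa> = Min (range (\<lambda>s. d$s / f$s))"
    and T_def: "T = (\<lambda>V. R + \<gamma> *\<^sub>R (P *v V))"
    and Vpi_def: "V\<pi> = matrix_inv (mat 1 - \<gamma> *\<^sub>R P) *v R"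
    and cond: "\<beta> > \<gamma>^2 * (1 - \<kappa>)"
    and fixpt: "transpose Phi *v \<theta>star = wproj f Phi (T (transpose Phi *v \<theta>star))"
  shows "(wnorm f (transpose Phi *v \<theta>star - V\<pi>)
           \<le> 1 / sqrt (1 - \<gamma>^2 / \<beta> * (1 - \<kappa>)) * wnorm f (wproj f Phi V\<pi> - V\<pi>)) \<and>
         (wnorm d (transpose Phi *v \<theta>star - V\<pi>)
           \<le> 1 / sqrt (\<gamma> * (1 - \<gamma>^2 / \<beta> * (1 - \<kappa>))) * wnorm f (wproj f Phi V\<pi> - V\<pi>))"
proof -
  define x where "x = transpose Phi *v \<theta>star"
  define q where "q = \<gamma>^2 / \<beta> * (1 - \<kappa>)"
  have f0: "\<forall>s. 0 \<le> f$s"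
    using f_pos less_imp_le by blast
  have fd: "f v* (mat 1 - \<beta> *\<^sub>R P) = d"
    using matrix_inv_left[OF invertible_id_minus_scaled_stochastic[OF P]] beta
    by (simp add: f_def vector_matrix_mul_assoc)
  have kappa: "\<kappa> * f$j \<le> d$j" for j
    using Min_le[of "range (\<lambda>s. d$s / f$s)" "d$j / f$j"] f_pos
    by (simp add: kappa_def pos_le_divide_eq)
  note weights = emphatic_weight_bounds[OF P beta(1) f0 fd kappa]
  have V: "V\<pi> = R + \<gamma> *\<^sub>R (P *v V\<pi>)"
    unfolding Vpi_def using gamma
    by (intro fixed_point_matrix_inv_id_minus invertible_id_minus_scaled_stochastic[OF P]) simp
  have "\<gamma>^2 * ((1 - \<kappa>) / \<beta>) < 1"
    using cond beta by (simp add: field_simps)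
  from wnorm_projected_fixed_point_error_le[OF f_pos wnorm_power2_stochastic_mult_le[OF P f0]
      this V] weights fixpt
  have f_bound: "wnorm f (x - V\<pi>) \<le> 1 / sqrt (1 - q) * wnorm f (wproj f Phi V\<pi> - V\<pi>)"
    by (simp add: x_def q_def T_def)
  have "wnorm d (x - V\<pi>) \<le> wnorm f (x - V\<pi>)"
    using d weights(2) by (intro wnorm_mono_weight) (simp add: prob_vector_def)
  also have "\<dots> \<le> 1 / sqrt (\<gamma> * (1 - q)) * wnorm f (wproj f Phi V\<pi> - V\<pi>)"
  proof -
    have "0 < 1 - q"
      using cond beta by (simp add: q_def field_simps)
    hence "1 / sqrt (1 - q) \<le> 1 / sqrt (\<gamma> * (1 - q))"
      using gamma by (intro divide_left_mono real_sqrt_le_mono) auto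
    thus ?thesis
      using f_bound by (smt (verit) mult_right_mono wnorm_eq_norm_wscale[OF f0] norm_ge_zero)
  qed
  finally show ?thesis
    using f_bound by (simp add: x_def q_def)
qed

end
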